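(* For all closed terms $P,Q\in\mathcal S_A$: $\mathrm{EqFSCL}\vdash P=Q$ if and only if $\mathbb M_{se}\models P=Q$, i.e. if and only if $se(P)=se(Q)$.
   Context: Let $A$ be a nonempty set of atoms. The signature $\Sigma_{SCL}(A)$ consists of the constants $\mathsf T,\mathsf F$, each atom $a\in A$ as a constant, unary negation $\neg$, and binary connectives $x\land^\circ y$ (left-sequential conjunction) and $x\lor^\circ y$ (left-sequential disjunction). $\mathcal S_A$ is the set of closed terms over $\Sigma_{SCL}(A)$. EqFSCL is the following set of equations in variables $x,y,z$: (F1) $\mathsf F=\neg\mathsf T$; (F2) $x\lor^\circ y=\neg(\neg x\land^\circ\neg y)$; (F3) $\neg\neg x=x$; (F4) $\mathsf T\land^\circ x=x$; (F5) $x\lor^\circ\mathsf F=x$; (F6) $\mathsf F\land^\circ x=\mathsf F$; (F7) $(x\land^\circ y)\land^\circ z=x\land^\circ(y\land^\circ z)$; (F8) $\neg x\land^\circ\mathsf F=x\land^\circ\mathsf F$; (F9) $(x\land^\circ\mathsf F)\lor^\circ y=(x\lor^\circ\mathsf T)\land^\circ y$; (F10) $(x\land^\circ y)\lor^\circ(z\land^\circ\mathsf F)=(x\lor^\circ(z\land^\circ\mathsf F))\land^\circ(y\lor^\circ(z\land^\circ\mathsf F))$. $E\vdash s=t$ means derivability in equational logic from $E$. Evaluation trees $\mathcal T_A$: $\mathsf T,\mathsf F\in\mathcal T_A$ and $(X\unlhd a\unrhd Y)\in\mathcal T_A$ for $X,Y\in\mathcal T_A$, $a\in A$ (root $a$,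 left branch $X$, right branch $Y$). Leaf replacement: $\mathsf T[\mathsf T\mapsto Y,\mathsf F\mapsto Z]=Y$, $\mathsf F[\mathsf T\mapsto Y,\mathsf F\mapsto Z]=Z$, $(X_1\unlhd a\unrhd X_2)[\mathsf T\mapsto Y,\mathsf F\mapsto Z]=X_1[\ldots]\unlhd a\unrhd X_2[\ldots]$; omitted replacements are identities. $se:\mathcal S_A\to\mathcal T_A$: $se(\mathsf T)=\mathsf T$, $se(\mathsf F)=\mathsf F$, $se(a)=\mathsf T\unlhd a\unrhd\mathsf F$, $se(\neg P)=se(P)[\mathsf T\mapsto\mathsf F,\mathsf F\mapsto\mathsf T]$, $se(P\land^\circ Q)=se(P)[\mathsf T\mapsto se(Q)]$, $se(P\lor^\circ Q)=se(P)[\mathsf F\mapsto se(Q)]$. $\mathbb M_{se}$ is the $\Sigma_{SCL}(A)$-algebra with domain $\{se(P)\mid P\in\mathcal S_A\}$ interpreting $\mathsf T,\mathsf F,a$ as $\mathsf T,\mathsf F,\mathsf T\unlhd a\unrhd\mathsf F$ and $\neg X=X[\mathsf T\mapsto\mathsf F,\mathsf F\mapsto\mathsf T]$, $X\land^\circ Y=X[\mathsf T\mapsto Y]$, $X\lor^\circ Y=X[\mathsf F\mapsto Y]$; so the interpretation of a closed term $P$ is $se(P)$. *)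

theory Defs
  imports Main
begin

text \<open>Closed terms over Sigma_SCL(A); the atom set A is the (nonempty) type 'a.\<close>
datatype 'a sterm = ST | SF | SAtom 'a | SNeg "'a sterm"
  | SAnd "'a sterm" "'a sterm" | SOr "'a sterm" "'a sterm"

datatype ('a, 'v) tm = Var 'v | Tt | Ft | At 'a | Neg "('a, 'v) tm"
  | LAnd "('a, 'v) tm" "('a, 'v) tm" | LOr "('a, 'v) tm" "('a, 'v) tm"

fun subst :: "('v \<Rightarrow> ('a, 'w) tm) \<Rightarrow> ('a, 'v) tm \<Rightarrow> ('a, 'w) tm" where
  "subst s (Var v) = s v"
| "subst s Tt = Tt"
| "subst s Ft = Ft"
| "subst s (At a) = At a"
| "subst s (Neg x) = Neg (subst s x)"
| "subst s (LAnd x y) = LAnd (subst s x) (subst s y)"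
| "subst s (LOr x y) = LOr (subst s x) (subst s y)"

fun emb :: "'a sterm \<Rightarrow> ('a, 'v) tm" where
  "emb ST = Tt"
| "emb SF = Ft"
| "emb (SAtom a) = At a"
| "emb (SNeg x) = Neg (emb x)"
| "emb (SAnd x y) = LAnd (emb x) (emb y)"
| "emb (SOr x y) = LOr (emb x) (emb y)"

definition EqFSCL :: "(('a, nat) tm \<times> ('a, nat) tm) set" where
  "EqFSCL = (let x = Var 0; y = Var 1; z = Var 2 in
    { (Ft, Neg Tt)
    , (LOr x y, Neg (LAnd (Neg x) (Neg y)))
    , (Neg (Neg x), x)
    , (LAnd Tt x, x)
    , (LOr x Ft, x)
    , (LAnd Ft x, Ft)
    , (LAnd (LAnd x y) z, LAnd x (LAnd y z))
    , (LAnd (Neg x) Ft, LAnd x Ft)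
    , (LOr (LAnd x Ft) y, LAnd (LOr x Tt) y)
    , (LOr (LAnd x y) (LAnd z Ft), LAnd (LOr x (LAnd z Ft)) (LOr y (LAnd z Ft))) })"

inductive derivable :: "(('a, 'v) tm \<times> ('a, 'v) tm) set \<Rightarrow> ('a, 'v) tm \<Rightarrow> ('a, 'v) tm \<Rightarrow> bool"
  for E where
  ax: "(l, r) \<in> E \<Longrightarrow> derivable E (subst s l) (subst s r)"
| refl: "derivable E t t"
| sym: "derivable E t u \<Longrightarrow> derivable E u t"
| trans: "derivable E t u \<Longrightarrow> derivable E u w \<Longrightarrow> derivable E t w"
| cong_Neg: "derivable E t u \<Longrightarrow> derivable E (Neg t) (Neg u)"
| cong_And: "derivable E t1 u1 \<Longrightarrow> derivable E t2 u2 \<Longrightarrow> derivable E (LAnd t1 t2) (LAnd u1 u2)"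
| cong_Or: "derivable E t1 u1 \<Longrightarrow> derivable E t2 u2 \<Longrightarrow> derivable E (LOr t1 t2) (LOr u1 u2)"

text \<open>Evaluation trees: ENode X a Y is X \<unlhd> a \<unrhd> Y.\<close>
datatype 'a etree = ET | EF | ENode "'a etree" 'a "'a etree"

fun repl :: "'a etree \<Rightarrow> 'a etree \<Rightarrow> 'a etree \<Rightarrow> 'a etree" where
  "repl ET Y Z = Y"
| "repl EF Y Z = Z"
| "repl (ENode X1 a X2) Y Z = ENode (repl X1 Y Z) a (repl X2 Y Z)"

fun se :: "'a sterm \<Rightarrow> 'a etree" where
  "se ST = ET"
| "se SF = EF"
| "se (SAtom a) = ENode ET a EF"
| "se (SNeg P) = repl (se P) EF ET"
| "se (SAnd P Q) = repl (se P) (se Q) EF"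
| "se (SOr P Q) = repl (se P) ET (se Q)"

end

theory Submission
  imports Defs
begin

text \<open>Soundness: every equation of EqFSCL holds in the evaluation-tree model for every
  valuation of its variables. Completeness: every closed term is provably equal to a normal
  form in the sense of the paper -- a T-term, an F-term \<open>P \<and>\<^sup>\<circ> F\<close>, or \<open>P \<and>\<^sup>\<circ> c\<close> with \<open>P\<close> a
  T-term and \<open>c\<close> a \<open>*\<close>-term built from \<open>\<ell>\<close>-terms by left-normalised sequential conjunctions
  and disjunctions -- and \<open>se\<close> is injective on normal forms. Injectivity rests on the monoid
  of trees under \<open>X \<cdot> Y = X[T \<mapsto> Y]\<close>: it is right cancellative, it satisfies a Levi
  lemma, and the tree of a \<open>*\<close>-term, which has both \<open>T\<close>- and \<open>F\<close>-leaves, has no nontrivial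
  \<open>F\<close>-free left factor. This pins down the T-term prefix, then the outermost connective
  of the \<open>*\<close>-term, and recursively its components.\<close>

section \<open>Leaf replacement\<close>

fun has_T :: "'a etree \<Rightarrow> bool" where
  "has_T ET = True"
| "has_T EF = False"
| "has_T (ENode L a R) = (has_T L \<or> has_T R)"

fun has_F :: "'a etree \<Rightarrow> bool" where
  "has_F ET = False"
| "has_F EF = True"
| "has_F (ENode L a R) = (has_F L \<or> has_F R)"

lemma repl_repl: "repl (repl X A B) C D = repl X (repl A C D) (repl B C D)"
  by (induction X) auto

lemma repl_ET_EF [simp]: "repl X ET EF = X"
  by (induction X) auto

lemma has_T_or_has_F: "has_T X \<or> has_F X"
  by (induction X) auto

lemma has_T_if_not_has_F: "\<not> has_F X \<Longrightarrow> has_T X"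
  using has_T_or_has_F by blast

lemma has_T_repl [simp]: "has_T (repl X Y Z) \<longleftrightarrow> has_T X \<and> has_T Y \<or> has_F X \<and> has_T Z"
  by (induction X) auto

lemma has_F_repl [simp]: "has_F (repl X Y Z) \<longleftrightarrow> has_T X \<and> has_F Y \<or> has_F X \<and> has_F Z"
  by (induction X) auto

lemma repl_cong_no_F: "\<not> has_F X \<Longrightarrow> repl X Y Z = repl X Y W"
  by (induction X) auto

lemma repl_cong_no_T: "\<not> has_T X \<Longrightarrow> repl X Y Z = repl X W Z"
  by (induction X) auto

lemma repl_no_T: "\<not> has_T X \<Longrightarrow> repl X Y EF = X"
  using repl_cong_no_T[of X Y EF ET] by simp

lemma repl_no_F: "\<not> has_F X \<Longrightarrow> repl X ET Z = X"
  using repl_cong_no_F[of X ET Z EF] by simp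

lemma repl_EF_EF_inj:
  "repl X EF EF = repl Y EF EF \<Longrightarrow> \<not> has_F X \<Longrightarrow> \<not> has_F Y \<Longrightarrow> X = Y"
proof (induction X arbitrary: Y)
  case ET
  then show ?case by (cases Y) auto
next
  case EF
  then show ?case by simp
next
  case (ENode L a R)
  then show ?case by (cases Y) auto
qed

definition tree_neg :: "'a etree \<Rightarrow> 'a etree" where
  "tree_neg X = repl X EF ET"

lemma tree_neg_tree_neg [simp]: "tree_neg (tree_neg X) = X"
  unfolding tree_neg_def by (simp add: repl_repl)

lemma tree_neg_inj: "tree_neg X = tree_neg Y \<Longrightarrow> X = Y"
  by (metis tree_neg_tree_neg)

lemma repl_tree_neg: "repl (tree_neg X) Y Z = repl X Z Y"
  unfolding tree_neg_def by (simp add: repl_repl)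

lemma tree_neg_repl_F: "tree_neg (repl X ET Z) = repl (tree_neg X) (tree_neg Z) EF"
  unfolding tree_neg_def by (simp add: repl_repl)

lemma has_T_tree_neg [simp]: "has_T (tree_neg X) = has_F X"
  unfolding tree_neg_def by auto

section \<open>Cancellation and factorization\<close>

lemma size_repl_T: "has_T V \<Longrightarrow> size B \<le> size (repl V B Z)"
  by (induction V) auto

lemma repl_T_eq_self: "has_T B \<Longrightarrow> repl V B EF = B \<Longrightarrow> V = ET"
proof (cases V)
  case (ENode L a R)
  assume B: "has_T B" "repl V B EF = B"
  show ?thesis
  proof (cases "has_T V")
    case True
    then have "has_T L \<or> has_T R" using ENode by simp
    then have "size B < size (repl V B EF)"
      using ENode size_repl_T[of L B EF] size_repl_T[of R B EF] by auto
    then show ?thesis using B by simp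
  next
    case False
    then show ?thesis using B repl_no_T[of V B] by simp
  qed
qed auto

lemma repl_T_right_cancel:
  assumes "has_T B"
  shows "repl V B EF = repl V' B EF \<Longrightarrow> V = V'"
proof (induction V arbitrary: V')
  case ET
  then show ?case using repl_T_eq_self[OF assms, of V'] by simp
next
  case EF
  then show ?case using assms by (cases V') auto
next
  case (ENode L a R)
  then show ?case using repl_T_eq_self[OF assms, of "ENode L a R"] by (cases V') auto
qed

lemma repl_F_right_cancel:
  assumes "has_F B" and "repl V ET B = repl V' ET B"
  shows "V = V'"
proof -
  have "repl (tree_neg V) (tree_neg B) EF = repl (tree_neg V') (tree_neg B) EF"
    using arg_cong[OF assms(2), of tree_neg] by (simp add: tree_neg_repl_F)
  then show ?thesis
    using repl_T_right_cancel[of "tree_neg B"] assms(1) tree_neg_inj by auto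
qed

lemma repl_T_comparable:
  "repl A B EF = repl A' B' EF \<Longrightarrow> has_T A \<Longrightarrow>
   (\<exists>V. B = repl V B' EF) \<or> (\<exists>V. B' = repl V B EF)"
proof (induction A arbitrary: A')
  case ET
  then show ?case by auto
next
  case EF
  then show ?case by simp
next
  case (ENode A1 a A2)
  show ?case
  proof (cases A')
    case (ENode A1' a' A2')
    then have "repl A1 B EF = repl A1' B' EF" "repl A2 B EF = repl A2' B' EF"
      using ENode.prems(1) by simp_all
    then show ?thesis using ENode.IH ENode.prems(2) by auto
  next
    case ET
    then have "B' = repl (ENode A1 a A2) B EF" using ENode.prems(1) by simp
    then show ?thesis by blast
  qed (use ENode.prems in simp)
qed

text \<open>The Levi lemma of the monoid of trees under \<open>X \<cdot> Y = repl X Y EF\<close>.\<close>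

lemma repl_T_levi:
  assumes eq: "repl A B EF = repl A' B' EF" and "has_T B" "has_T B'"
  shows "A = A' \<and> \<not> has_T A \<or> (\<exists>V. B = repl V B' EF \<and> A' = repl A V EF)
    \<or> (\<exists>V. B' = repl V B EF \<and> A = repl A' V EF)"
proof (cases "has_T A")
  case False
  then have "\<not> has_T A'" using eq \<open>has_T B'\<close> repl_no_T[of A B]
    by (metis has_T_repl)
  then show ?thesis using eq False by (simp add: repl_no_T)
next
  case True
  from repl_T_comparable[OF eq True] show ?thesis
  proof (elim disjE exE)
    fix V assume "B = repl V B' EF"
    then have "repl (repl A V EF) B' EF = repl A' B' EF" using eq by (simp add: repl_repl)
    then show ?thesis using \<open>B = _\<close> repl_T_right_cancel[OF \<open>has_T B'\<close>] by blast
  next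
    fix V assume "B' = repl V B EF"
    then have "repl (repl A' V EF) B EF = repl A B EF" using eq by (simp add: repl_repl)
    then show ?thesis using \<open>B' = _\<close> repl_T_right_cancel[OF \<open>has_T B\<close>] by blast
  qed
qed

lemma size_lt_of_repl_F_eq_repl_T:
  "has_T G \<Longrightarrow> has_F W \<Longrightarrow> repl G ET E = repl A W EF \<Longrightarrow> size E < size W"
proof (induction G arbitrary: A)
  case ET
  then show ?case by (cases A) auto
next
  case EF
  then show ?case by simp
next
  case (ENode G1 a G2)
  show ?case
  proof (cases A)
    case ET
    then have "W = repl (ENode G1 a G2) ET E" using ENode.prems by simp
    moreover have "has_F (ENode G1 a G2)" using calculation ENode.prems(2) by auto
    ultimately show ?thesis
      using size_repl_T[of "tree_neg G1" E ET] size_repl_T[of "tree_neg G2" E ET]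
      by (auto simp: repl_tree_neg)
  qed (use ENode in auto)
qed

text \<open>The size hypothesis excludes \<open>G = EF\<close>, where \<open>E\<close> would be \<open>repl A W EF\<close>.\<close>

lemma repl_F_eq_repl_T_split:
  "size E < size W \<Longrightarrow> has_T E \<Longrightarrow> has_F E \<Longrightarrow> repl G ET E = repl A W EF \<Longrightarrow>
   \<not> has_F A \<and> (\<exists>V. G = repl A V EF \<and> W = repl V ET E)"
proof (induction A arbitrary: G)
  case ET
  then show ?case by auto
next
  case EF
  then show ?case by (cases G) auto
next
  case (ENode A1 a A2)
  show ?case
  proof (cases G)
    case EF
    then have E: "E = repl (ENode A1 a A2) W EF" using ENode.prems by simp
    then have "has_T (ENode A1 a A2)" using ENode.prems(2) repl_no_T by fastforce
    then show ?thesis using size_repl_T[of _ W EF] E ENode.prems(1) by fastforce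
  next
    case (ENode G1 a' G2)
    have "repl G1 ET E = repl A1 W EF" "repl G2 ET E = repl A2 W EF" "a' = a"
      using ENode ENode.prems by auto
    then obtain V1 V2 where "\<not> has_F A1" "G1 = repl A1 V1 EF" "W = repl V1 ET E"
        "\<not> has_F A2" "G2 = repl A2 V2 EF" "W = repl V2 ET E"
      using ENode.IH ENode.prems(1-3) by meson
    moreover have "V1 = V2" using repl_F_right_cancel ENode.prems(3) calculation by metis
    ultimately show ?thesis using ENode \<open>a' = a\<close> by auto
  qed (use ENode.prems in simp)
qed

lemma repl_F_eq_repl_T:
  assumes "repl G ET E = repl A W EF" "has_T G" "has_F W" "has_T E" "has_F E"
  shows "\<not> has_F A \<and> (\<exists>V. G = repl A V EF \<and> W = repl V ET E)"
  using repl_F_eq_repl_T_split size_lt_of_repl_F_eq_repl_T assms by blast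

definition T_prime :: "'a etree \<Rightarrow> bool" where
  "T_prime K \<longleftrightarrow> (\<forall>q K'. \<not> has_F q \<longrightarrow> K = repl q K' EF \<longrightarrow> q = ET)"

lemma T_prime_factorization_unique:
  "\<not> has_F p \<Longrightarrow> \<not> has_F p' \<Longrightarrow> T_prime K \<Longrightarrow> T_prime K' \<Longrightarrow>
   repl p K EF = repl p' K' EF \<Longrightarrow> p = p' \<and> K = K'"
proof (induction p arbitrary: p')
  case ET
  then show ?case unfolding T_prime_def by auto
next
  case EF
  then show ?case by simp
next
  case (ENode L a R)
  show ?case
  proof (cases p')
    case ET
    then show ?thesis using ENode.prems unfolding T_prime_def
      by (metis repl.simps(1))
  next
    case (ENode L' a' R')
    then show ?thesis using ENode.IH ENode.prems by auto
  qed (use ENode.prems in simp)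
qed

section \<open>Trees of normal forms\<close>

text \<open>\<open>Lit True a P Q\<close> is the \<open>\<ell>\<close>-term \<open>(a \<and>\<^sup>\<circ> P) \<or>\<^sup>\<circ> (Q \<and>\<^sup>\<circ> F)\<close> of the paper and
  \<open>Lit False a P Q\<close> the one with \<open>\<not>a\<close>; the T-terms \<open>P\<close>, \<open>Q\<close> are represented by their
  (\<open>F\<close>-free) trees. \<open>Conj\<close> and \<open>Disj\<close> build the \<open>*\<close>-terms, whose left argument may not
  have the same main connective (\<open>star_wf\<close>).\<close>

datatype 'a star = Lit bool 'a "'a etree" "'a etree"
  | is_Conj: Conj "'a star" "'a star"
  | is_Disj: Disj "'a star" "'a star"

fun star_tree :: "'a star \<Rightarrow> 'a etree" where
  "star_tree (Lit s a P Q) =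
     (if s then ENode P a (repl Q EF EF) else ENode (repl Q EF EF) a P)"
| "star_tree (Conj c d) = repl (star_tree c) (star_tree d) EF"
| "star_tree (Disj c d) = repl (star_tree c) ET (star_tree d)"

fun star_wf :: "'a star \<Rightarrow> bool" where
  "star_wf (Lit s a P Q) \<longleftrightarrow> \<not> has_F P \<and> \<not> has_F Q"
| "star_wf (Conj c d) \<longleftrightarrow> \<not> is_Conj c \<and> star_wf c \<and> star_wf d"
| "star_wf (Disj c d) \<longleftrightarrow> \<not> is_Disj c \<and> star_wf c \<and> star_wf d"

fun star_dual :: "'a star \<Rightarrow> 'a star" where
  "star_dual (Lit s a P Q) = Lit (\<not> s) a Q P"
| "star_dual (Conj c d) = Disj (star_dual c) (star_dual d)"
| "star_dual (Disj c d) = Conj (star_dual c) (star_dual d)"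

lemma star_tree_has_T_has_F: "star_wf c \<Longrightarrow> has_T (star_tree c) \<and> has_F (star_tree c)"
  by (induction c) (auto simp: has_T_if_not_has_F)

lemma star_tree_dual: "star_wf c \<Longrightarrow> star_tree (star_dual c) = tree_neg (star_tree c)"
proof (induction c)
  case (Lit s a P Q)
  then show ?case unfolding tree_neg_def
    by (auto simp: repl_repl repl_cong_no_F[of P EF ET EF] repl_cong_no_F[of Q ET ET EF] repl_no_F)
qed (simp_all add: tree_neg_def repl_repl)

lemma star_wf_dual: "star_wf c \<Longrightarrow> star_wf (star_dual c)"
  by (induction c) (auto simp: star.disc_eq_case split: star.splits)

lemma is_Conj_star_dual [simp]: "is_Conj (star_dual c) = is_Disj c"
  by (cases c) simp_all

lemma Lit_tree_eq_repl_T: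
  assumes "star_wf (Lit s a P Q)" and "star_tree (Lit s a P Q) = repl (ENode A1 b A2) W EF"
  shows "\<not> has_F W \<and> (has_F A1 \<or> has_F A2)"
proof -
  obtain X Y where XY: "{X, Y} = {A1, A2}" "P = repl X W EF" "repl Q EF EF = repl Y W EF"
    using assms(2) by (cases s) auto
  have "\<not> has_F (repl X W EF)" "\<not> has_T (repl Y W EF)"
    using assms(1) XY(2) arg_cong[OF XY(3), of has_T] by simp_all
  then have "\<not> has_F W" "has_F Y"
    using has_T_or_has_F[of X] has_T_or_has_F[of Y] has_T_or_has_F[of W] by auto
  then show ?thesis using XY(1) by (auto simp: doubleton_eq_iff)
qed

lemma star_tree_T_prime: "star_wf c \<Longrightarrow> T_prime (star_tree c)"
proof (induction c)
  case (Lit s a P Q)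
  show ?case unfolding T_prime_def
  proof (intro allI impI)
    fix q K assume q: "\<not> has_F q" and eq: "star_tree (Lit s a P Q) = repl q K EF"
    show "q = ET"
    proof (cases q)
      case (ENode q1 b q2)
      then show ?thesis using Lit_tree_eq_repl_T[OF Lit.prems eq[unfolded ENode]] q by simp
    qed (use q in auto)
  qed
next
  case (Conj c d)
  have c: "has_T (star_tree c)" "has_F (star_tree c)" and d: "has_T (star_tree d)"
    using star_tree_has_T_has_F Conj.prems by auto
  show ?case unfolding T_prime_def
  proof (intro allI impI)
    fix q K assume q: "\<not> has_F q" and "star_tree (Conj c d) = repl q K EF"
    then have eq: "repl (star_tree c) (star_tree d) EF = repl q K EF" by simp
    have "has_T K" using arg_cong[OF eq, of has_T] c d q by auto
    from repl_T_levi[OF eq d this] show "q = ET"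
    proof (elim disjE exE conjE)
      fix V assume "star_tree c = repl q V EF"
      then show ?thesis using Conj q unfolding T_prime_def by auto
    qed (use c q in auto)
  qed
next
  case (Disj c d)
  have c: "has_T (star_tree c)" "has_F (star_tree c)"
    and d: "has_T (star_tree d)" "has_F (star_tree d)"
    using star_tree_has_T_has_F Disj.prems by auto
  show ?case unfolding T_prime_def
  proof (intro allI impI)
    fix q K assume q: "\<not> has_F q" and "star_tree (Disj c d) = repl q K EF"
    then have eq: "repl (star_tree c) ET (star_tree d) = repl q K EF" by simp
    have "has_F K" using arg_cong[OF eq, of has_F] c d q by auto
    with repl_F_eq_repl_T[OF eq c(1) this d] obtain V where "star_tree c = repl q V EF"
      by blast
    then show "q = ET" using Disj q unfolding T_prime_def by auto
  qed
qed

lemma star_tree_non_Conj_factor: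
  assumes wf: "star_wf c" and "\<not> is_Conj c" and eq: "star_tree c = repl A W EF" and "has_F W"
  shows "A = ET"
proof (cases c)
  case (Lit s a P Q)
  show ?thesis
  proof (cases A)
    case (ENode A1 b A2)
    then show ?thesis using Lit_tree_eq_repl_T[of s a P Q A1 b A2 W] assms Lit by simp
  qed (use eq Lit in \<open>auto split: if_splits\<close>)
next
  case (Disj c1 c2)
  have "has_T (star_tree c1)" "has_T (star_tree c2)" "has_F (star_tree c2)"
    using star_tree_has_T_has_F wf Disj by auto
  with repl_F_eq_repl_T[of "star_tree c1" "star_tree c2" A W] eq Disj \<open>has_F W\<close>
  obtain V where "\<not> has_F A" "star_tree c1 = repl A V EF"
    by auto
  then show ?thesis using star_tree_T_prime[of c1] wf Disj unfolding T_prime_def by auto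
qed (use assms in simp)

lemma star_tree_Conj_cancel:
  assumes wf: "star_wf (Conj c d)" "star_wf (Conj c' d')"
    and eq: "star_tree (Conj c d) = star_tree (Conj c' d')"
  shows "star_tree c = star_tree c' \<and> star_tree d = star_tree d'"
proof -
  have trivial_overlap: "V = ET"
    if "star_wf (Conj c d)" "star_wf (Conj c' d')"
      and "star_tree c' = repl (star_tree c) V EF" "star_tree d = repl V (star_tree d') EF"
    for c d c' d' :: "'a star" and V
  proof (cases "has_F V")
    case True
    then have "star_tree c = ET" using star_tree_non_Conj_factor[of c' "star_tree c" V] that by simp
    then show ?thesis using star_tree_has_T_has_F[of c] that(1) by simp
  next
    case False
    moreover have "star_wf d" using that(1) by simp
    ultimately show ?thesis using star_tree_T_prime[of d] that(4) unfolding T_prime_def by blast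
  qed
  have T: "has_T (star_tree c)" "has_T (star_tree d)" "has_T (star_tree d')"
    using star_tree_has_T_has_F wf by auto
  from repl_T_levi[OF eq[simplified] T(2,3)] show ?thesis
  proof (elim disjE exE conjE)
    fix V
    assume V: "star_tree d = repl V (star_tree d') EF" "star_tree c' = repl (star_tree c) V EF"
    with trivial_overlap[OF wf V(2,1)] show ?thesis by simp
  next
    fix V
    assume V: "star_tree d' = repl V (star_tree d) EF" "star_tree c = repl (star_tree c') V EF"
    with trivial_overlap[OF wf(2,1) V(2,1)] show ?thesis by simp
  qed (use T in simp)
qed

lemma star_tree_Disj_cancel:
  assumes wf: "star_wf (Disj c d)" "star_wf (Disj c' d')"
    and eq: "star_tree (Disj c d) = star_tree (Disj c' d')"
  shows "star_tree c = star_tree c' \<and> star_tree d = star_tree d'"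
proof -
  have dual: "star_wf (Conj (star_dual c) (star_dual d))
      \<and> star_tree (Conj (star_dual c) (star_dual d)) = tree_neg (star_tree (Disj c d))"
    if "star_wf (Disj c d)" for c d :: "'a star"
    using that by (simp add: star_wf_dual star_tree_dual tree_neg_repl_F)
  have "star_tree (Conj (star_dual c) (star_dual d))
      = star_tree (Conj (star_dual c') (star_dual d'))"
    using dual[OF wf(1)] dual[OF wf(2)] eq by presburger
  then have "star_tree (star_dual c) = star_tree (star_dual c')
      \<and> star_tree (star_dual d) = star_tree (star_dual d')"
    using star_tree_Conj_cancel dual[OF wf(1)] dual[OF wf(2)] by blast
  then show ?thesis using wf by (simp add: star_tree_dual tree_neg_inj)
qed

lemma star_tree_eq_is_Conj:
  assumes "star_wf c" "star_wf c'" "star_tree c = star_tree c'" "is_Conj c"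
  shows "is_Conj c'"
proof (rule ccontr)
  assume "\<not> is_Conj c'"
  obtain c1 d where c: "c = Conj c1 d" using \<open>is_Conj c\<close> by (cases c) auto
  have "has_F (star_tree d)" using star_tree_has_T_has_F assms(1) c by auto
  moreover have "star_tree c' = repl (star_tree c1) (star_tree d) EF" using assms(3) c by simp
  ultimately have "star_tree c1 = ET"
    using star_tree_non_Conj_factor[OF assms(2) \<open>\<not> is_Conj c'\<close>] by blast
  then show False using star_tree_has_T_has_F[of c1] assms(1) c by simp
qed

lemma star_tree_eq_is_Disj:
  assumes "star_wf c" "star_wf c'" "star_tree c = star_tree c'" "is_Disj c"
  shows "is_Disj c'"
  using star_tree_eq_is_Conj[of "star_dual c" "star_dual c'"] assms
  by (simp add: star_wf_dual star_tree_dual)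

lemma star_tree_inj: "star_wf c \<Longrightarrow> star_wf c' \<Longrightarrow> star_tree c = star_tree c' \<Longrightarrow> c = c'"
proof (induction c arbitrary: c')
  case (Lit s a P Q)
  have "\<not> is_Conj c'" "\<not> is_Disj c'"
    using star_tree_eq_is_Conj[of c' "Lit s a P Q"] star_tree_eq_is_Disj[of c' "Lit s a P Q"]
      Lit.prems by auto
  then obtain s' a' P' Q' where c': "c' = Lit s' a' P' Q'" by (cases c') auto
  have wf: "\<not> has_F P" "\<not> has_F P'" "\<not> has_F Q" "\<not> has_F Q'" using Lit.prems c' by auto
  have eq: "star_tree (Lit s a P Q) = star_tree (Lit s' a' P' Q')" using Lit.prems c' by simp
  show ?case
  proof (cases "s = s'")
    case True
    then have "P = P'" "a = a'" "repl Q EF EF = repl Q' EF EF" using eq by (cases s; simp)+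
    then show ?thesis using repl_EF_EF_inj wf True c' by auto
  next
    case False
    then have "P = repl Q' EF EF \<or> P' = repl Q EF EF" using eq by (cases s) auto
    moreover have "has_F (repl Q EF EF)" "has_F (repl Q' EF EF)"
      using has_T_or_has_F[of Q] has_T_or_has_F[of Q'] by auto
    ultimately show ?thesis using wf by metis
  qed
next
  case (Conj c d)
  have "is_Conj c'" using star_tree_eq_is_Conj[of "Conj c d" c'] Conj.prems by simp
  then obtain c1 d1 where c': "c' = Conj c1 d1" by (cases c') auto
  have wf: "star_wf (Conj c d)" "star_wf (Conj c1 d1)" using Conj.prems c' by simp_all
  have "star_tree c = star_tree c1 \<and> star_tree d = star_tree d1"
    by (rule star_tree_Conj_cancel[OF wf]) (use Conj.prems(3) c' in simp)
  with Conj.IH wf c' show ?case by (metis star_wf.simps(2))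
next
  case (Disj c d)
  have "is_Disj c'" using star_tree_eq_is_Disj[of "Disj c d" c'] Disj.prems by simp
  then obtain c1 d1 where c': "c' = Disj c1 d1" by (cases c') auto
  have wf: "star_wf (Disj c d)" "star_wf (Disj c1 d1)" using Disj.prems c' by simp_all
  have "star_tree c = star_tree c1 \<and> star_tree d = star_tree d1"
    by (rule star_tree_Disj_cancel[OF wf]) (use Disj.prems(3) c' in simp)
  with Disj.IH wf c' show ?case by (metis star_wf.simps(3))
qed

text \<open>\<open>T_form P\<close>, \<open>F_form P\<close> and \<open>Star_form P c\<close> stand for \<open>P\<close>, \<open>P \<and>\<^sup>\<circ> F\<close> and \<open>P \<and>\<^sup>\<circ> c\<close>.\<close>

datatype 'a nf = T_form "'a etree" | F_form "'a etree" | Star_form "'a etree" "'a star"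

fun nf_tree :: "'a nf \<Rightarrow> 'a etree" where
  "nf_tree (T_form P) = P"
| "nf_tree (F_form P) = repl P EF EF"
| "nf_tree (Star_form P c) = repl P (star_tree c) EF"

fun nf_wf :: "'a nf \<Rightarrow> bool" where
  "nf_wf (T_form P) \<longleftrightarrow> \<not> has_F P"
| "nf_wf (F_form P) \<longleftrightarrow> \<not> has_F P"
| "nf_wf (Star_form P c) \<longleftrightarrow> \<not> has_F P \<and> star_wf c"

lemma nf_tree_cases:
  assumes "nf_wf N"
  obtains P where "N = T_form P" "has_T (nf_tree N)" "\<not> has_F (nf_tree N)"
  | P where "N = F_form P" "\<not> has_T (nf_tree N)" "has_F (nf_tree N)"
  | P c where "N = Star_form P c" "has_T (nf_tree N)" "has_F (nf_tree N)"
  using assms star_tree_has_T_has_F has_T_if_not_has_F by (cases N) auto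

lemma nf_tree_inj:
  assumes wf: "nf_wf N" "nf_wf M" and eq: "nf_tree N = nf_tree M"
  shows "N = M"
proof -
  have same_leaves:
    "has_T (nf_tree N) = has_T (nf_tree M)" "has_F (nf_tree N) = has_F (nf_tree M)"
    using eq by simp_all
  from wf(1) show ?thesis
  proof (cases rule: nf_tree_cases)
    case (1 P)
    from wf(2) show ?thesis by (cases rule: nf_tree_cases) (use 1 eq same_leaves in auto)
  next
    case (2 P)
    from wf(2) show ?thesis
    proof (cases rule: nf_tree_cases)
      case (2 P')
      then show ?thesis using \<open>N = F_form P\<close> wf eq repl_EF_EF_inj by auto
    qed (use 2 same_leaves in auto)
  next
    case (3 P c)
    from wf(2) show ?thesis
    proof (cases rule: nf_tree_cases)
      case (3 P' c')
      then have "P = P' \<and> star_tree c = star_tree c'"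
        using wf eq \<open>N = Star_form P c\<close>
        by (intro T_prime_factorization_unique star_tree_T_prime) simp_all
      then show ?thesis using star_tree_inj wf \<open>N = Star_form P c\<close> 3 by auto
    qed (use 3 same_leaves in auto)
  qed
qed

section \<open>Derived equations\<close>

abbreviation EqFSCL_derivable :: "('a, nat) tm \<Rightarrow> ('a, nat) tm \<Rightarrow> bool" (infix "\<simeq>" 50)
  where "x \<simeq> y \<equiv> derivable EqFSCL x y"

declare derivable.trans [trans]

lemma EqFSCL_instance:
  "(l, r) \<in> EqFSCL \<Longrightarrow> t = subst (\<lambda>n. [x, y, z] ! n) l \<Longrightarrow>
   u = subst (\<lambda>n. [x, y, z] ! n) r \<Longrightarrow> t \<simeq> u"
  using derivable.ax by blast

lemma F1: "Ft \<simeq> Neg Tt"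
  by (rule EqFSCL_instance[of Ft "Neg Tt"]) (simp_all add: EqFSCL_def Let_def)

lemma F2: "LOr x y \<simeq> Neg (LAnd (Neg x) (Neg y))"
  by (rule EqFSCL_instance[of "LOr (Var 0) (Var 1)" "Neg (LAnd (Neg (Var 0)) (Neg (Var 1)))"
      _ x y]) (simp_all add: EqFSCL_def Let_def)

lemma F3: "Neg (Neg x) \<simeq> x"
  by (rule EqFSCL_instance[of "Neg (Neg (Var 0))" "Var 0" _ x]) (simp_all add: EqFSCL_def Let_def)

lemma F4: "LAnd Tt x \<simeq> x"
  by (rule EqFSCL_instance[of "LAnd Tt (Var 0)" "Var 0" _ x]) (simp_all add: EqFSCL_def Let_def)

lemma F5: "LOr x Ft \<simeq> x"
  by (rule EqFSCL_instance[of "LOr (Var 0) Ft" "Var 0" _ x]) (simp_all add: EqFSCL_def Let_def)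

lemma F6: "LAnd Ft x \<simeq> Ft"
  by (rule EqFSCL_instance[of "LAnd Ft (Var 0)" Ft _ x]) (simp_all add: EqFSCL_def Let_def)

lemma F7: "LAnd (LAnd x y) z \<simeq> LAnd x (LAnd y z)"
  by (rule EqFSCL_instance[of "LAnd (LAnd (Var 0) (Var 1)) (Var 2)"
      "LAnd (Var 0) (LAnd (Var 1) (Var 2))" _ x y z])
    (simp_all add: EqFSCL_def Let_def numeral_2_eq_2)

lemma F8: "LAnd (Neg x) Ft \<simeq> LAnd x Ft"
  by (rule EqFSCL_instance[of "LAnd (Neg (Var 0)) Ft" "LAnd (Var 0) Ft" _ x])
    (simp_all add: EqFSCL_def Let_def)

lemma F9: "LOr (LAnd x Ft) y \<simeq> LAnd (LOr x Tt) y"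
  by (rule EqFSCL_instance[of "LOr (LAnd (Var 0) Ft) (Var 1)" "LAnd (LOr (Var 0) Tt) (Var 1)"
      _ x y]) (simp_all add: EqFSCL_def Let_def)

lemma F10: "LOr (LAnd x y) (LAnd z Ft) \<simeq> LAnd (LOr x (LAnd z Ft)) (LOr y (LAnd z Ft))"
  by (rule EqFSCL_instance[of "LOr (LAnd (Var 0) (Var 1)) (LAnd (Var 2) Ft)"
      "LAnd (LOr (Var 0) (LAnd (Var 2) Ft)) (LOr (Var 1) (LAnd (Var 2) Ft))" _ x y z])
    (simp_all add: EqFSCL_def Let_def numeral_2_eq_2)

lemma cong_And_left: "a \<simeq> b \<Longrightarrow> LAnd a c \<simeq> LAnd b c"
  by (rule derivable.cong_And, assumption, rule derivable.refl)

lemma cong_And_right: "a \<simeq> b \<Longrightarrow> LAnd c a \<simeq> LAnd c b"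
  by (rule derivable.cong_And, rule derivable.refl, assumption)

lemma cong_Or_left: "a \<simeq> b \<Longrightarrow> LOr a c \<simeq> LOr b c"
  by (rule derivable.cong_Or, assumption, rule derivable.refl)

lemma cong_Or_right: "a \<simeq> b \<Longrightarrow> LOr c a \<simeq> LOr c b"
  by (rule derivable.cong_Or, rule derivable.refl, assumption)

lemma neg_Tt: "Neg Tt \<simeq> Ft"
  by (rule derivable.sym, rule F1)

lemma neg_Ft: "Neg Ft \<simeq> Tt"
proof -
  have "Neg Ft \<simeq> Neg (Neg Tt)" by (rule derivable.cong_Neg, rule F1)
  also have "\<dots> \<simeq> Tt" by (rule F3)
  finally show ?thesis .
qed

lemma neg_LAnd: "Neg (LAnd x y) \<simeq> LOr (Neg x) (Neg y)"
proof -
  have "LOr (Neg x) (Neg y) \<simeq> Neg (LAnd (Neg (Neg x)) (Neg (Neg y)))" by (rule F2)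
  also have "\<dots> \<simeq> Neg (LAnd x y)" by (rule derivable.cong_Neg, rule derivable.cong_And; rule F3)
  finally show ?thesis by (rule derivable.sym)
qed

lemma neg_LOr: "Neg (LOr x y) \<simeq> LAnd (Neg x) (Neg y)"
proof -
  have "Neg (LOr x y) \<simeq> Neg (Neg (LAnd (Neg x) (Neg y)))" by (rule derivable.cong_Neg, rule F2)
  also have "\<dots> \<simeq> LAnd (Neg x) (Neg y)" by (rule F3)
  finally show ?thesis .
qed

lemma neg_cancel: "Neg a \<simeq> Neg b \<Longrightarrow> a \<simeq> b"
proof -
  assume "Neg a \<simeq> Neg b"
  have "a \<simeq> Neg (Neg a)" by (rule derivable.sym, rule F3)
  also have "\<dots> \<simeq> Neg (Neg b)" by (rule derivable.cong_Neg) fact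
  also have "\<dots> \<simeq> b" by (rule F3)
  finally show ?thesis .
qed

lemma derivable_via_Neg: "Neg a \<simeq> c \<Longrightarrow> Neg b \<simeq> c \<Longrightarrow> a \<simeq> b"
  by (rule neg_cancel, rule derivable.trans, assumption, rule derivable.sym, assumption)

lemma LAnd_Tt_right: "LAnd x Tt \<simeq> x"
proof (rule neg_cancel)
  have "Neg (LAnd x Tt) \<simeq> LOr (Neg x) (Neg Tt)" by (rule neg_LAnd)
  also have "\<dots> \<simeq> LOr (Neg x) Ft" by (rule cong_Or_right, rule neg_Tt)
  also have "\<dots> \<simeq> Neg x" by (rule F5)
  finally show "Neg (LAnd x Tt) \<simeq> Neg x" .
qed

lemma LOr_Tt_left: "LOr Tt x \<simeq> Tt"
proof -
  have "LOr Tt x \<simeq> Neg (LAnd (Neg Tt) (Neg x))" by (rule F2)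
  also have "\<dots> \<simeq> Neg (LAnd Ft (Neg x))"
    by (rule derivable.cong_Neg, rule cong_And_left, rule neg_Tt)
  also have "\<dots> \<simeq> Neg Ft" by (rule derivable.cong_Neg, rule F6)
  also have "\<dots> \<simeq> Tt" by (rule neg_Ft)
  finally show ?thesis .
qed

lemma LOr_assoc: "LOr (LOr x y) z \<simeq> LOr x (LOr y z)"
proof (rule derivable_via_Neg)
  have "Neg (LOr (LOr x y) z) \<simeq> LAnd (Neg (LOr x y)) (Neg z)" by (rule neg_LOr)
  also have "\<dots> \<simeq> LAnd (LAnd (Neg x) (Neg y)) (Neg z)" by (rule cong_And_left, rule neg_LOr)
  also have "\<dots> \<simeq> LAnd (Neg x) (LAnd (Neg y) (Neg z))" by (rule F7)
  finally show "Neg (LOr (LOr x y) z) \<simeq> LAnd (Neg x) (LAnd (Neg y) (Neg z))" .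
  have "Neg (LOr x (LOr y z)) \<simeq> LAnd (Neg x) (Neg (LOr y z))" by (rule neg_LOr)
  also have "\<dots> \<simeq> LAnd (Neg x) (LAnd (Neg y) (Neg z))" by (rule cong_And_right, rule neg_LOr)
  finally show "Neg (LOr x (LOr y z)) \<simeq> LAnd (Neg x) (LAnd (Neg y) (Neg z))" .
qed

lemma neg_LOr_Tt: "Neg (LOr x Tt) \<simeq> LAnd (Neg x) Ft"
proof -
  have "Neg (LOr x Tt) \<simeq> LAnd (Neg x) (Neg Tt)" by (rule neg_LOr)
  also have "\<dots> \<simeq> LAnd (Neg x) Ft" by (rule cong_And_right, rule neg_Tt)
  finally show ?thesis .
qed

lemma LOr_Neg_Tt: "LOr (Neg x) Tt \<simeq> LOr x Tt"
proof (rule derivable_via_Neg)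
  have "Neg (LOr (Neg x) Tt) \<simeq> LAnd (Neg (Neg x)) Ft" by (rule neg_LOr_Tt)
  also have "\<dots> \<simeq> LAnd x Ft" by (rule cong_And_left, rule F3)
  finally show "Neg (LOr (Neg x) Tt) \<simeq> LAnd x Ft" .
  have "Neg (LOr x Tt) \<simeq> LAnd (Neg x) Ft" by (rule neg_LOr_Tt)
  also have "\<dots> \<simeq> LAnd x Ft" by (rule F8)
  finally show "Neg (LOr x Tt) \<simeq> LAnd x Ft" .
qed

lemma neg_LAnd_Ft: "Neg (LAnd x Ft) \<simeq> LOr x Tt"
proof -
  have "Neg (LAnd x Ft) \<simeq> LOr (Neg x) (Neg Ft)" by (rule neg_LAnd)
  also have "\<dots> \<simeq> LOr (Neg x) Tt" by (rule cong_Or_right, rule neg_Ft)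
  also have "\<dots> \<simeq> LOr x Tt" by (rule LOr_Neg_Tt)
  finally show ?thesis .
qed

lemma LAnd_Ft_LOr_Tt: "LAnd x Ft \<simeq> LAnd (LOr x Tt) Ft"
proof -
  have "LAnd x Ft \<simeq> LOr (LAnd x Ft) Ft" by (rule derivable.sym, rule F5)
  also have "\<dots> \<simeq> LAnd (LOr x Tt) Ft" by (rule F9)
  finally show ?thesis .
qed

lemma LAnd_LOr_Tt_distrib:
  "LAnd (LOr x y) (LOr z Tt) \<simeq> LOr (LAnd x (LOr z Tt)) (LAnd y (LOr z Tt))"
proof (rule derivable_via_Neg)
  let ?z = "LAnd (Neg z) Ft"
  have "Neg (LAnd (LOr x y) (LOr z Tt)) \<simeq> LOr (Neg (LOr x y)) (Neg (LOr z Tt))"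
    by (rule neg_LAnd)
  also have "\<dots> \<simeq> LOr (LAnd (Neg x) (Neg y)) ?z"
    by (rule derivable.cong_Or, rule neg_LOr, rule neg_LOr_Tt)
  also have "\<dots> \<simeq> LAnd (LOr (Neg x) ?z) (LOr (Neg y) ?z)" by (rule F10)
  finally show "Neg (LAnd (LOr x y) (LOr z Tt)) \<simeq> LAnd (LOr (Neg x) ?z) (LOr (Neg y) ?z)" .
  have "Neg (LOr (LAnd x (LOr z Tt)) (LAnd y (LOr z Tt)))
      \<simeq> LAnd (Neg (LAnd x (LOr z Tt))) (Neg (LAnd y (LOr z Tt)))"
    by (rule neg_LOr)
  also have "\<dots> \<simeq> LAnd (LOr (Neg x) (Neg (LOr z Tt))) (LOr (Neg y) (Neg (LOr z Tt)))"
    by (rule derivable.cong_And; rule neg_LAnd)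
  also have "\<dots> \<simeq> LAnd (LOr (Neg x) ?z) (LOr (Neg y) ?z)"
    by (rule derivable.cong_And; rule cong_Or_right, rule neg_LOr_Tt)
  finally show "Neg (LOr (LAnd x (LOr z Tt)) (LAnd y (LOr z Tt)))
      \<simeq> LAnd (LOr (Neg x) ?z) (LOr (Neg y) ?z)" .
qed

section \<open>Terms of normal forms\<close>

text \<open>On \<open>F\<close>-free trees, \<open>T_term\<close> produces the T-terms of the paper.\<close>

fun T_term :: "'a etree \<Rightarrow> ('a, 'v) tm" where
  "T_term ET = Tt"
| "T_term EF = Ft"
| "T_term (ENode L a R) = LOr (LAnd (At a) (T_term L)) (T_term R)"

lemma LOr_T_term: "\<not> has_F p \<Longrightarrow> LOr (T_term p) x \<simeq> T_term p"
proof (induction p)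
  case ET
  then show ?case by (simp add: LOr_Tt_left)
next
  case EF
  then show ?case by simp
next
  case (ENode L a R)
  have "LOr (T_term (ENode L a R)) x \<simeq> LOr (LAnd (At a) (T_term L)) (LOr (T_term R) x)"
    by (simp add: LOr_assoc)
  also have "\<dots> \<simeq> T_term (ENode L a R)" using ENode by (simp add: cong_Or_right)
  finally show ?case .
qed

lemma neg_T_term: "\<not> has_F p \<Longrightarrow> Neg (T_term p) \<simeq> LAnd (T_term p) Ft"
proof -
  assume p: "\<not> has_F p"
  have "Neg (T_term p) \<simeq> Neg (LOr (T_term p) Tt)"
    by (rule derivable.cong_Neg, rule derivable.sym, rule LOr_T_term[OF p])
  also have "\<dots> \<simeq> Neg (LOr (Neg (T_term p)) Tt)"
    by (rule derivable.cong_Neg, rule derivable.sym, rule LOr_Neg_Tt)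
  also have "\<dots> \<simeq> LAnd (Neg (Neg (T_term p))) Ft" by (rule neg_LOr_Tt)
  also have "\<dots> \<simeq> LAnd (T_term p) Ft" by (rule cong_And_left, rule F3)
  finally show ?thesis .
qed

lemma neg_F_term: "\<not> has_F p \<Longrightarrow> Neg (LAnd (T_term p) Ft) \<simeq> T_term p"
  by (rule derivable.trans, rule neg_LAnd_Ft, rule LOr_T_term)

lemma neg_LAnd_T_term: "\<not> has_F p \<Longrightarrow> Neg (LAnd (T_term p) x) \<simeq> LAnd (T_term p) (Neg x)"
proof -
  assume p: "\<not> has_F p"
  have "Neg (LAnd (T_term p) x) \<simeq> LOr (Neg (T_term p)) (Neg x)" by (rule neg_LAnd)
  also have "\<dots> \<simeq> LOr (LAnd (T_term p) Ft) (Neg x)" by (rule cong_Or_left, rule neg_T_term[OF p])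
  also have "\<dots> \<simeq> LAnd (LOr (T_term p) Tt) (Neg x)" by (rule F9)
  also have "\<dots> \<simeq> LAnd (T_term p) (Neg x)" by (rule cong_And_left, rule LOr_T_term[OF p])
  finally show ?thesis .
qed

lemma LAnd_T_term_distrib:
  "\<not> has_F p \<Longrightarrow> LAnd (LOr x y) (T_term p) \<simeq> LOr (LAnd x (T_term p)) (LAnd y (T_term p))"
proof -
  assume p: "\<not> has_F p"
  have "LAnd (LOr x y) (T_term p) \<simeq> LAnd (LOr x y) (LOr (T_term p) Tt)"
    by (rule cong_And_right, rule derivable.sym, rule LOr_T_term[OF p])
  also have "\<dots> \<simeq> LOr (LAnd x (LOr (T_term p) Tt)) (LAnd y (LOr (T_term p) Tt))"
    by (rule LAnd_LOr_Tt_distrib)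
  also have "\<dots> \<simeq> LOr (LAnd x (T_term p)) (LAnd y (T_term p))"
    by (rule derivable.cong_Or; rule cong_And_right, rule LOr_T_term[OF p])
  finally show ?thesis .
qed

lemma LAnd_T_terms:
  "\<not> has_F p \<Longrightarrow> \<not> has_F q \<Longrightarrow> LAnd (T_term p) (T_term q) \<simeq> T_term (repl p q EF)"
proof (induction p)
  case ET
  then show ?case by (simp add: F4)
next
  case EF
  then show ?case by simp
next
  case (ENode L a R)
  have "LAnd (T_term (ENode L a R)) (T_term q)
      \<simeq> LOr (LAnd (LAnd (At a) (T_term L)) (T_term q)) (LAnd (T_term R) (T_term q))"
    using LAnd_T_term_distrib ENode.prems by simp
  also have "\<dots> \<simeq> LOr (LAnd (At a) (LAnd (T_term L) (T_term q))) (LAnd (T_term R) (T_term q))"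
    by (rule cong_Or_left, rule F7)
  also have "\<dots> \<simeq> LOr (LAnd (At a) (T_term (repl L q EF))) (T_term (repl R q EF))"
    using ENode by (auto intro!: derivable.cong_Or cong_And_right)
  finally show ?case by simp
qed

lemma LAnd_T_terms_assoc:
  assumes "\<not> has_F p" "\<not> has_F q"
  shows "LAnd (T_term p) (LAnd (T_term q) x) \<simeq> LAnd (T_term (repl p q EF)) x"
proof -
  have "LAnd (T_term p) (LAnd (T_term q) x) \<simeq> LAnd (LAnd (T_term p) (T_term q)) x"
    by (rule derivable.sym, rule F7)
  also have "\<dots> \<simeq> LAnd (T_term (repl p q EF)) x" by (rule cong_And_left, rule LAnd_T_terms[OF assms])
  finally show ?thesis .
qed

definition lit_term :: "('a, nat) tm \<Rightarrow> 'a etree \<Rightarrow> 'a etree \<Rightarrow> ('a, nat) tm" where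
  "lit_term x P Q = LOr (LAnd x (T_term P)) (LAnd (T_term Q) Ft)"

lemma neg_lit_term:
  assumes "\<not> has_F P" "\<not> has_F Q"
  shows "Neg (lit_term x P Q) \<simeq> lit_term (Neg x) Q P"
proof -
  let ?y = "LOr (Neg x) (LAnd (T_term P) Ft)"
  have "Neg (lit_term x P Q) \<simeq> LAnd (Neg (LAnd x (T_term P))) (Neg (LAnd (T_term Q) Ft))"
    unfolding lit_term_def by (rule neg_LOr)
  also have "\<dots> \<simeq> LAnd (LOr (Neg x) (Neg (T_term P))) (T_term Q)"
    by (rule derivable.cong_And, rule neg_LAnd, rule neg_F_term[OF assms(2)])
  also have "\<dots> \<simeq> LAnd ?y (T_term Q)"
    by (rule cong_And_left, rule cong_Or_right, rule neg_T_term[OF assms(1)])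
  also have "\<dots> \<simeq> LAnd ?y (LOr (T_term Q) (LAnd (T_term P) Ft))"
    by (rule cong_And_right, rule derivable.sym, rule LOr_T_term[OF assms(2)])
  also have "\<dots> \<simeq> lit_term (Neg x) Q P"
    unfolding lit_term_def by (rule derivable.sym, rule F10)
  finally show ?thesis .
qed

lemma LAnd_lit_term_T_term:
  assumes "\<not> has_F P" "\<not> has_F Q" "\<not> has_F q"
  shows "LAnd (lit_term x P Q) (T_term q) \<simeq> lit_term x (repl P q EF) Q"
proof -
  have "LAnd (lit_term x P Q) (T_term q)
      \<simeq> LOr (LAnd (LAnd x (T_term P)) (T_term q)) (LAnd (LAnd (T_term Q) Ft) (T_term q))"
    unfolding lit_term_def by (rule LAnd_T_term_distrib[OF assms(3)])
  also have "\<dots> \<simeq> LOr (LAnd x (LAnd (T_term P) (T_term q))) (LAnd (T_term Q) (LAnd Ft (T_term q)))"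
    by (rule derivable.cong_Or; rule F7)
  also have "\<dots> \<simeq> LOr (LAnd x (T_term (repl P q EF))) (LAnd (T_term Q) Ft)"
    by (rule derivable.cong_Or, rule cong_And_right, rule LAnd_T_terms[OF assms(1,3)],
        rule cong_And_right, rule F6)
  finally show ?thesis unfolding lit_term_def .
qed

lemma LOr_LAnd_lit_term_T_terms:
  assumes "\<not> has_F P" "\<not> has_F Q" "\<not> has_F q" "\<not> has_F r"
  shows "LOr (LAnd (lit_term x P Q) (T_term r)) (T_term q)
    \<simeq> LOr (LAnd x (T_term (repl P r EF))) (T_term (repl Q q EF))"
proof -
  let ?x = "LAnd x (T_term (repl P r EF))"
  have "LOr (LAnd (lit_term x P Q) (T_term r)) (T_term q)
      \<simeq> LOr (lit_term x (repl P r EF) Q) (T_term q)"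
    by (rule cong_Or_left, rule LAnd_lit_term_T_term[OF assms(1,2,4)])
  also have "\<dots> \<simeq> LOr ?x (LOr (LAnd (T_term Q) Ft) (T_term q))"
    unfolding lit_term_def by (rule LOr_assoc)
  also have "\<dots> \<simeq> LOr ?x (LAnd (LOr (T_term Q) Tt) (T_term q))"
    by (rule cong_Or_right, rule F9)
  also have "\<dots> \<simeq> LOr ?x (LAnd (T_term Q) (T_term q))"
    by (rule cong_Or_right, rule cong_And_left, rule LOr_T_term[OF assms(2)])
  also have "\<dots> \<simeq> LOr ?x (T_term (repl Q q EF))"
    by (rule cong_Or_right, rule LAnd_T_terms[OF assms(2,3)])
  finally show ?thesis .
qed

lemma LOr_LAnd_Neg_swap:
  assumes "\<not> has_F U" "\<not> has_F V"
  shows "LOr (LAnd (Neg x) (T_term U)) (T_term V) \<simeq> LOr (LAnd x (T_term V)) (T_term U)"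
proof -
  let ?u = "T_term U :: ('a, nat) tm" and ?v = "T_term V :: ('a, nat) tm"
  let ?x = "LOr x (LAnd ?u Ft)" and ?w = "LOr (LAnd x ?v) (LAnd ?u Ft)"
  have neg_left: "Neg (LAnd (Neg x) ?u) \<simeq> ?x"
  proof -
    have "Neg (LAnd (Neg x) ?u) \<simeq> LOr (Neg (Neg x)) (Neg ?u)" by (rule neg_LAnd)
    also have "\<dots> \<simeq> ?x" by (rule derivable.cong_Or, rule F3, rule neg_T_term[OF assms(1)])
    finally show ?thesis .
  qed
  have "LOr (LAnd (Neg x) ?u) ?v \<simeq> Neg (LAnd (Neg (LAnd (Neg x) ?u)) (Neg ?v))" by (rule F2)
  also have "\<dots> \<simeq> Neg (LAnd ?x (LAnd ?v Ft))"
    by (rule derivable.cong_Neg, rule derivable.cong_And, rule neg_left,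
        rule neg_T_term[OF assms(2)])
  also have "\<dots> \<simeq> Neg (LAnd (LAnd ?x ?v) Ft)"
    by (rule derivable.cong_Neg, rule derivable.sym, rule F7)
  also have "\<dots> \<simeq> Neg (LAnd (LAnd ?x (LOr ?v (LAnd ?u Ft))) Ft)"
    by (rule derivable.cong_Neg, rule cong_And_left, rule cong_And_right, rule derivable.sym,
        rule LOr_T_term[OF assms(2)])
  also have "\<dots> \<simeq> Neg (LAnd ?w Ft)"
    by (rule derivable.cong_Neg, rule cong_And_left, rule derivable.sym, rule F10)
  also have "\<dots> \<simeq> LOr ?w Tt" by (rule neg_LAnd_Ft)
  also have "\<dots> \<simeq> LOr (LAnd x ?v) (LOr (LAnd ?u Ft) Tt)" by (rule LOr_assoc)
  also have "\<dots> \<simeq> LOr (LAnd x ?v) (LAnd (LOr ?u Tt) Tt)" by (rule cong_Or_right, rule F9)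
  also have "\<dots> \<simeq> LOr (LAnd x ?v) (LOr ?u Tt)" by (rule cong_Or_right, rule LAnd_Tt_right)
  also have "\<dots> \<simeq> LOr (LAnd x ?v) ?u" by (rule cong_Or_right, rule LOr_T_term[OF assms(1)])
  finally show ?thesis .
qed

lemma LOr_LAnd_T_term_expand:
  assumes "\<not> has_F p"
  shows "LOr (LAnd x y) (T_term p)
    \<simeq> LOr (LAnd (Neg x) (T_term p)) (LOr (LAnd (Neg y) (T_term p)) Tt)"
proof -
  let ?t = "T_term p :: ('a, nat) tm"
  have "LOr (LAnd x y) ?t \<simeq> Neg (LAnd (Neg (LAnd x y)) (Neg ?t))" by (rule F2)
  also have "\<dots> \<simeq> Neg (LAnd (LOr (Neg x) (Neg y)) (LAnd ?t Ft))"
    by (rule derivable.cong_Neg, rule derivable.cong_And, rule neg_LAnd, rule neg_T_term[OF assms])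
  also have "\<dots> \<simeq> Neg (LAnd (LAnd (LOr (Neg x) (Neg y)) ?t) Ft)"
    by (rule derivable.cong_Neg, rule derivable.sym, rule F7)
  also have "\<dots> \<simeq> LOr (LAnd (LOr (Neg x) (Neg y)) ?t) Tt" by (rule neg_LAnd_Ft)
  also have "\<dots> \<simeq> LOr (LOr (LAnd (Neg x) ?t) (LAnd (Neg y) ?t)) Tt"
    by (rule cong_Or_left, rule LAnd_T_term_distrib[OF assms])
  also have "\<dots> \<simeq> LOr (LAnd (Neg x) ?t) (LOr (LAnd (Neg y) ?t) Tt)" by (rule LOr_assoc)
  finally show ?thesis .
qed

lemma LOr_LAnd_T_term_absorb:
  assumes "\<not> has_F p"
  shows "LOr (LAnd x y) (T_term p) \<simeq> LOr (LAnd x (LOr y (T_term p))) (T_term p)"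
proof -
  let ?t = "T_term p :: ('a, nat) tm"
  let ?x = "LAnd (Neg x) ?t" and ?y = "LAnd (Neg y) ?t"
  have "LAnd (Neg (LOr y ?t)) ?t \<simeq> LAnd (LAnd (Neg y) (Neg ?t)) ?t"
    by (rule cong_And_left, rule neg_LOr)
  also have "\<dots> \<simeq> LAnd (LAnd (Neg y) (LAnd ?t Ft)) ?t"
    by (rule cong_And_left, rule cong_And_right, rule neg_T_term[OF assms])
  also have "\<dots> \<simeq> LAnd (Neg y) (LAnd (LAnd ?t Ft) ?t)" by (rule F7)
  also have "\<dots> \<simeq> LAnd (Neg y) (LAnd ?t (LAnd Ft ?t))" by (rule cong_And_right, rule F7)
  also have "\<dots> \<simeq> LAnd (Neg y) (LAnd ?t Ft)" by (rule cong_And_right, rule cong_And_right, rule F6)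
  also have "\<dots> \<simeq> LAnd ?y Ft" by (rule derivable.sym, rule F7)
  finally have "LOr (LAnd (Neg (LOr y ?t)) ?t) Tt \<simeq> LOr (LAnd ?y Ft) Tt" by (rule cong_Or_left)
  also have "\<dots> \<simeq> LAnd (LOr ?y Tt) Tt" by (rule F9)
  also have "\<dots> \<simeq> LOr ?y Tt" by (rule LAnd_Tt_right)
  finally have "LOr (LAnd x (LOr y ?t)) ?t \<simeq> LOr ?x (LOr ?y Tt)"
    using LOr_LAnd_T_term_expand[OF assms] by (metis cong_Or_right derivable.trans)
  then show ?thesis
    using LOr_LAnd_T_term_expand[OF assms] by (metis derivable.sym derivable.trans)
qed

fun star_term :: "'a star \<Rightarrow> ('a, nat) tm" where
  "star_term (Lit s a P Q) = lit_term (if s then At a else Neg (At a)) P Q"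
| "star_term (Conj c d) = LAnd (star_term c) (star_term d)"
| "star_term (Disj c d) = LOr (star_term c) (star_term d)"

lemma neg_star_term: "star_wf c \<Longrightarrow> Neg (star_term c) \<simeq> star_term (star_dual c)"
proof (induction c)
  case (Lit s a P Q)
  show ?case
  proof (cases s)
    case True
    then show ?thesis using neg_lit_term[of P Q "At a"] Lit by simp
  next
    case False
    have "Neg (star_term (Lit s a P Q)) \<simeq> lit_term (Neg (Neg (At a))) Q P"
      using neg_lit_term[of P Q "Neg (At a)"] Lit False by simp
    also have "\<dots> \<simeq> lit_term (At a) Q P"
      unfolding lit_term_def by (rule cong_Or_left, rule cong_And_left, rule F3)
    finally show ?thesis using False by simp
  qed
next
  case (Conj c d)
  then show ?case by (auto intro: derivable.trans[OF neg_LAnd] derivable.cong_Or)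
next
  case (Disj c d)
  then show ?case by (auto intro: derivable.trans[OF neg_LOr] derivable.cong_And)
qed

fun star_and_T :: "'a star \<Rightarrow> 'a etree \<Rightarrow> 'a star" where
  "star_and_T (Lit s a P Q) q = Lit s a (repl P q EF) Q"
| "star_and_T (Conj c d) q = Conj c (star_and_T d q)"
| "star_and_T (Disj c d) q = Disj (star_and_T c q) (star_and_T d q)"

lemma is_Disj_star_and_T: "is_Disj (star_and_T c q) = is_Disj c"
  by (cases c) auto

lemma star_wf_star_and_T: "star_wf c \<Longrightarrow> \<not> has_F q \<Longrightarrow> star_wf (star_and_T c q)"
  by (induction c) (auto simp: is_Disj_star_and_T)

lemma LAnd_star_term_T_term:
  "star_wf c \<Longrightarrow> \<not> has_F q \<Longrightarrow> LAnd (star_term c) (T_term q) \<simeq> star_term (star_and_T c q)"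
proof (induction c)
  case (Lit s a P Q)
  then show ?case using LAnd_lit_term_T_term[of P Q q] by simp
next
  case (Conj c d)
  then show ?case by (auto intro: derivable.trans[OF F7] cong_And_right)
next
  case (Disj c d)
  then show ?case by (auto intro: derivable.trans[OF LAnd_T_term_distrib] derivable.cong_Or)
qed

fun star_and :: "'a star \<Rightarrow> 'a star \<Rightarrow> 'a star" where
  "star_and (Conj c1 c2) d = Conj c1 (star_and c2 d)"
| "star_and c d = Conj c d"

lemma star_wf_star_and: "star_wf c \<Longrightarrow> star_wf d \<Longrightarrow> star_wf (star_and c d)"
  by (induction c d rule: star_and.induct) auto

lemma LAnd_star_terms: "LAnd (star_term c) (star_term d) \<simeq> star_term (star_and c d)"
proof (induction c d rule: star_and.induct)
  case (1 c1 c2 d)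
  then show ?case by (auto intro: derivable.trans[OF F7] cong_And_right)
qed (auto intro: derivable.refl)

lemma LOr_LAnd_Lit_T_terms:
  assumes "star_wf (Lit s a P Q)" "\<not> has_F r" "\<not> has_F q"
  shows "LOr (LAnd (star_term (Lit s a P Q)) (T_term r)) (T_term q)
    \<simeq> T_term (repl (star_tree (Lit s a P Q)) r q)"
proof -
  have PQ: "\<not> has_F P" "\<not> has_F Q" using assms(1) by auto
  have "repl P r q = repl P r EF" using repl_cong_no_F PQ by blast
  moreover have "repl (repl Q EF EF) r q = repl Q q EF"
    using repl_cong_no_F[of Q q q EF] PQ by (simp add: repl_repl)
  moreover have "LOr (LAnd (star_term (Lit s a P Q)) (T_term r)) (T_term q)
      \<simeq> LOr (LAnd (if s then At a else Neg (At a)) (T_term (repl P r EF))) (T_term (repl Q q EF))"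
    using LOr_LAnd_lit_term_T_terms[OF PQ assms(3,2)] by simp
  moreover have "LOr (LAnd (Neg (At a)) (T_term (repl P r EF))) (T_term (repl Q q EF))
      \<simeq> LOr (LAnd (At a) (T_term (repl Q q EF))) (T_term (repl P r EF))"
    by (rule LOr_LAnd_Neg_swap) (use PQ assms in simp_all)
  ultimately show ?thesis by (cases s) (auto intro: derivable.trans)
qed

lemma LOr_LAnd_star_term_T_terms:
  "star_wf c \<Longrightarrow> \<not> has_F r \<Longrightarrow> \<not> has_F q \<Longrightarrow>
   LOr (LAnd (star_term c) (T_term r)) (T_term q) \<simeq> T_term (repl (star_tree c) r q)"
proof (induction c arbitrary: r q)
  case (Lit s a P Q)
  then show ?case by (rule LOr_LAnd_Lit_T_terms)
next
  case (Conj c d)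
  let ?c = "star_term c" and ?d = "star_term d"
  have "LOr (LAnd (LAnd ?c ?d) (T_term r)) (T_term q)
      \<simeq> LOr (LAnd ?c (LAnd ?d (T_term r))) (T_term q)"
    by (rule cong_Or_left, rule F7)
  also have "\<dots> \<simeq> LOr (LAnd ?c (LOr (LAnd ?d (T_term r)) (T_term q))) (T_term q)"
    by (rule LOr_LAnd_T_term_absorb, rule Conj.prems)
  also have "\<dots> \<simeq> LOr (LAnd ?c (T_term (repl (star_tree d) r q))) (T_term q)"
    by (rule cong_Or_left, rule cong_And_right, rule Conj.IH(2)) (use Conj.prems in auto)
  also have "\<dots> \<simeq> T_term (repl (star_tree c) (repl (star_tree d) r q) q)"
    by (rule Conj.IH(1)) (use Conj.prems in auto)
  finally show ?case by (simp add: repl_repl)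
next
  case (Disj c d)
  let ?c = "LAnd (star_term c) (T_term r)" and ?d = "LAnd (star_term d) (T_term r)"
  have "LOr (LAnd (LOr (star_term c) (star_term d)) (T_term r)) (T_term q)
      \<simeq> LOr (LOr ?c ?d) (T_term q)"
    by (rule cong_Or_left, rule LAnd_T_term_distrib, rule Disj.prems)
  also have "\<dots> \<simeq> LOr ?c (LOr ?d (T_term q))" by (rule LOr_assoc)
  also have "\<dots> \<simeq> LOr ?c (T_term (repl (star_tree d) r q))"
    by (rule cong_Or_right, rule Disj.IH(2)) (use Disj.prems in auto)
  also have "\<dots> \<simeq> T_term (repl (star_tree c) r (repl (star_tree d) r q))"
    by (rule Disj.IH(1)) (use Disj.prems in auto)
  finally show ?case by (simp add: repl_repl)
qed

lemma LAnd_star_term_F_term: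
  assumes "star_wf c" "\<not> has_F q"
  shows "LAnd (star_term c) (LAnd (T_term q) Ft) \<simeq> LAnd (T_term (repl (star_tree c) q ET)) Ft"
proof -
  have "LAnd (star_term c) (LAnd (T_term q) Ft) \<simeq> LAnd (LAnd (star_term c) (T_term q)) Ft"
    by (rule derivable.sym, rule F7)
  also have "\<dots> \<simeq> LAnd (LOr (LAnd (star_term c) (T_term q)) Tt) Ft" by (rule LAnd_Ft_LOr_Tt)
  also have "\<dots> \<simeq> LAnd (T_term (repl (star_tree c) q ET)) Ft"
    using LOr_LAnd_star_term_T_terms[of c q ET] assms by (auto intro: cong_And_left)
  finally show ?thesis .
qed

section \<open>Normalization\<close>

fun nf_term :: "'a nf \<Rightarrow> ('a, nat) tm" where
  "nf_term (T_form P) = T_term P"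
| "nf_term (F_form P) = LAnd (T_term P) Ft"
| "nf_term (Star_form P c) = LAnd (T_term P) (star_term c)"

fun nf_neg :: "'a nf \<Rightarrow> 'a nf" where
  "nf_neg (T_form P) = F_form P"
| "nf_neg (F_form P) = T_form P"
| "nf_neg (Star_form P c) = Star_form P (star_dual c)"

fun nf_and :: "'a nf \<Rightarrow> 'a nf \<Rightarrow> 'a nf" where
  "nf_and (T_form P) (T_form Q) = T_form (repl P Q EF)"
| "nf_and (T_form P) (F_form Q) = F_form (repl P Q EF)"
| "nf_and (T_form P) (Star_form Q c) = Star_form (repl P Q EF) c"
| "nf_and (F_form P) _ = F_form P"
| "nf_and (Star_form P c) (T_form Q) = Star_form P (star_and_T c Q)"
| "nf_and (Star_form P c) (F_form Q) = F_form (repl P (repl (star_tree c) Q ET) EF)"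
| "nf_and (Star_form P c) (Star_form Q d) = Star_form P (star_and (star_and_T c Q) d)"

lemma nf_wf_nf_neg: "nf_wf N \<Longrightarrow> nf_wf (nf_neg N)"
  by (cases N) (auto simp: star_wf_dual)

lemma nf_wf_nf_and: "nf_wf N \<Longrightarrow> nf_wf M \<Longrightarrow> nf_wf (nf_and N M)"
  by (cases N; cases M) (auto simp: star_wf_star_and_T star_wf_star_and)

lemma neg_nf_term: "nf_wf N \<Longrightarrow> Neg (nf_term N) \<simeq> nf_term (nf_neg N)"
proof (induction N)
  case (Star_form P c)
  then show ?case using neg_LAnd_T_term[of P "star_term c"] neg_star_term[of c]
    by (auto intro: derivable.trans cong_And_right)
qed (simp_all add: neg_T_term neg_F_term)

lemma LAnd_T_term_nf_term:
  "\<not> has_F P \<Longrightarrow> nf_wf M \<Longrightarrow> LAnd (T_term P) (nf_term M) \<simeq> nf_term (nf_and (T_form P) M)"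
  by (cases M) (simp_all add: LAnd_T_terms LAnd_T_terms_assoc)

lemma LAnd_Star_form_nf_term:
  assumes "\<not> has_F P" "star_wf c" "nf_wf M"
  shows "LAnd (LAnd (T_term P) (star_term c)) (nf_term M) \<simeq> nf_term (nf_and (Star_form P c) M)"
proof -
  have "LAnd (LAnd (T_term P) (star_term c)) (nf_term M)
      \<simeq> LAnd (T_term P) (LAnd (star_term c) (nf_term M))" by (rule F7)
  also have "\<dots> \<simeq> nf_term (nf_and (Star_form P c) M)"
  proof (cases M)
    case (T_form Q)
    then show ?thesis using assms LAnd_star_term_T_term[of c Q] by (simp add: cong_And_right)
  next
    case (F_form Q)
    let ?K = "repl (star_tree c) Q ET"
    have "LAnd (T_term P) (LAnd (star_term c) (LAnd (T_term Q) Ft))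
        \<simeq> LAnd (T_term P) (LAnd (T_term ?K) Ft)"
      using assms F_form by (simp add: cong_And_right LAnd_star_term_F_term)
    also have "\<dots> \<simeq> LAnd (T_term (repl P ?K EF)) Ft"
      by (rule LAnd_T_terms_assoc) (use assms F_form in simp_all)
    finally show ?thesis using F_form by simp
  next
    case (Star_form Q d)
    have "LAnd (star_term c) (LAnd (T_term Q) (star_term d))
        \<simeq> LAnd (LAnd (star_term c) (T_term Q)) (star_term d)" by (rule derivable.sym, rule F7)
    also have "\<dots> \<simeq> LAnd (star_term (star_and_T c Q)) (star_term d)"
      by (rule cong_And_left, rule LAnd_star_term_T_term) (use assms Star_form in auto)
    also have "\<dots> \<simeq> star_term (star_and (star_and_T c Q) d)" by (rule LAnd_star_terms)
    finally show ?thesis using Star_form by (simp add: cong_And_right)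
  qed
  finally show ?thesis .
qed

lemma LAnd_nf_terms:
  "nf_wf N \<Longrightarrow> nf_wf M \<Longrightarrow> LAnd (nf_term N) (nf_term M) \<simeq> nf_term (nf_and N M)"
proof (induction N)
  case (F_form P)
  have "LAnd (LAnd (T_term P) Ft) (nf_term M) \<simeq> LAnd (T_term P) (LAnd Ft (nf_term M))" by (rule F7)
  also have "\<dots> \<simeq> LAnd (T_term P) Ft" by (rule cong_And_right, rule F6)
  finally show ?case by (cases M) auto
qed (simp_all add: LAnd_T_term_nf_term LAnd_Star_form_nf_term)

fun nf_of :: "'a sterm \<Rightarrow> 'a nf" where
  "nf_of ST = T_form ET"
| "nf_of SF = F_form ET"
| "nf_of (SAtom a) = Star_form ET (Lit True a ET ET)"
| "nf_of (SNeg P) = nf_neg (nf_of P)"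
| "nf_of (SAnd P Q) = nf_and (nf_of P) (nf_of Q)"
| "nf_of (SOr P Q) = nf_neg (nf_and (nf_neg (nf_of P)) (nf_neg (nf_of Q)))"

lemma nf_wf_nf_of: "nf_wf (nf_of P)"
  by (induction P) (auto simp: nf_wf_nf_neg nf_wf_nf_and)

lemma derivable_nf_of: "emb P \<simeq> nf_term (nf_of P)"
proof (induction P)
  case ST
  then show ?case by (simp add: derivable.refl)
next
  case SF
  then show ?case by (simp add: derivable.sym F4)
next
  case (SAtom a)
  have "LAnd Tt (LOr (LAnd (At a) Tt) (LAnd Tt Ft)) \<simeq> LOr (LAnd (At a) Tt) (LAnd Tt Ft)"
    by (rule F4)
  also have "\<dots> \<simeq> LOr (At a) Ft" by (rule derivable.cong_Or, rule LAnd_Tt_right, rule F4)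
  also have "\<dots> \<simeq> At a" by (rule F5)
  finally show ?case by (simp add: lit_term_def derivable.sym)
next
  case (SNeg P)
  then show ?case using neg_nf_term[OF nf_wf_nf_of[of P]]
    by (auto intro: derivable.trans derivable.cong_Neg)
next
  case (SAnd P Q)
  then show ?case using LAnd_nf_terms[OF nf_wf_nf_of[of P] nf_wf_nf_of[of Q]]
    by (auto intro: derivable.trans derivable.cong_And)
next
  case (SOr P Q)
  let ?P = "nf_neg (nf_of P)" and ?Q = "nf_neg (nf_of Q)"
  have "emb (SOr P Q) \<simeq> Neg (LAnd (Neg (emb P)) (Neg (emb Q)))" by (simp add: F2)
  also have "\<dots> \<simeq> Neg (LAnd (nf_term ?P) (nf_term ?Q))"
    using SOr neg_nf_term[OF nf_wf_nf_of[of P]] neg_nf_term[OF nf_wf_nf_of[of Q]]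
    by (auto intro!: derivable.cong_Neg derivable.cong_And intro: derivable.trans)
  also have "\<dots> \<simeq> Neg (nf_term (nf_and ?P ?Q))"
    by (rule derivable.cong_Neg, rule LAnd_nf_terms) (auto simp: nf_wf_nf_neg nf_wf_nf_of)
  also have "\<dots> \<simeq> nf_term (nf_neg (nf_and ?P ?Q))"
    by (rule neg_nf_term) (auto simp: nf_wf_nf_neg nf_wf_nf_of nf_wf_nf_and)
  finally show ?case by simp
qed

section \<open>Soundness\<close>

fun tree_eval :: "('v \<Rightarrow> 'a etree) \<Rightarrow> ('a, 'v) tm \<Rightarrow> 'a etree" where
  "tree_eval \<sigma> (Var v) = \<sigma> v"
| "tree_eval \<sigma> Tt = ET"
| "tree_eval \<sigma> Ft = EF"
| "tree_eval \<sigma> (At a) = ENode ET a EF"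
| "tree_eval \<sigma> (Neg x) = repl (tree_eval \<sigma> x) EF ET"
| "tree_eval \<sigma> (LAnd x y) = repl (tree_eval \<sigma> x) (tree_eval \<sigma> y) EF"
| "tree_eval \<sigma> (LOr x y) = repl (tree_eval \<sigma> x) ET (tree_eval \<sigma> y)"

lemma tree_eval_subst: "tree_eval \<sigma> (subst s t) = tree_eval (\<lambda>v. tree_eval \<sigma> (s v)) t"
  by (induction t) auto

lemma EqFSCL_valid: "(l, r) \<in> EqFSCL \<Longrightarrow> tree_eval \<sigma> l = tree_eval \<sigma> r"
  unfolding EqFSCL_def Let_def by (auto simp: repl_repl)

lemma derivable_sound: "derivable EqFSCL s t \<Longrightarrow> tree_eval \<sigma> s = tree_eval \<sigma> t"
proof (induction arbitrary: \<sigma> rule: derivable.induct)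
  case (ax l r s)
  then show ?case by (simp add: tree_eval_subst EqFSCL_valid)
qed auto

lemma tree_eval_emb: "tree_eval \<sigma> (emb P) = se P"
  by (induction P) auto

lemma tree_eval_T_term: "\<not> has_F P \<Longrightarrow> tree_eval \<sigma> (T_term P) = P"
  by (induction P) (auto simp: repl_no_F)

lemma tree_eval_star_term: "star_wf c \<Longrightarrow> tree_eval \<sigma> (star_term c) = star_tree c"
  by (induction c) (auto simp: lit_term_def tree_eval_T_term repl_no_F)

lemma tree_eval_nf_term: "nf_wf N \<Longrightarrow> tree_eval \<sigma> (nf_term N) = nf_tree N"
  by (cases N) (auto simp: tree_eval_T_term tree_eval_star_term)

lemma se_eq_nf_tree: "se P = nf_tree (nf_of P)"
  using derivable_sound[OF derivable_nf_of[of P]] tree_eval_emb tree_eval_nf_term[OF nf_wf_nf_of]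
  by metis

section \<open>Completeness\<close>

theorem theorem2p4:
  fixes P Q :: "'a sterm"
  shows "derivable EqFSCL (emb P) (emb Q) \<longleftrightarrow> se P = se Q"
proof
  assume "derivable EqFSCL (emb P) (emb Q)"
  then show "se P = se Q" using derivable_sound tree_eval_emb by metis
next
  assume "se P = se Q"
  then have "nf_of P = nf_of Q" using se_eq_nf_tree nf_tree_inj nf_wf_nf_of by metis
  then show "derivable EqFSCL (emb P) (emb Q)"
    using derivable_nf_of[of P] derivable_nf_of[of Q] by (metis derivable.sym derivable.trans)
qed

end
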